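(* $R^p(3)=\tfrac12$ and $R(4)=\tfrac13$.
   Context: A qubit POVM is a finite family $\{\Pi_i\}_{i=1}^n$ of positive semidefinite operators summing to $\mathbb{I}$; it simulates a family $\{M_{a|x}\}$ if $M_{a|x}=\sum_i p(a|x,i)\Pi_i$ with $p(a|x,i)\ge0$, $\sum_a p(a|x,i)=1$. $\mathcal{P}_r$ is the family of two-outcome POVMs $\{\tfrac12(\mathbb{I}\pm r\hat n\cdot\vec\sigma)\}$ over all unit $\hat n\in\mathbb{R}^3$, and $\mathcal{P}^p_r$ the subfamily with $\hat n=(n_x,0,n_z)$. $R(n)$ (resp. $R^p(n)$) is the supremum of $r$ such that some $n$-outcome qubit POVM simulates $\mathcal{P}_r$ (resp. $\mathcal{P}^p_r$). *)

theory Defs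
  imports "HOL-Analysis.Analysis"
begin

type_synonym qop = "complex ^ 2 ^ 2"

definition sigma_x :: qop where
  "sigma_x = (\<chi> i j. if i = j then 0 else 1)"
definition sigma_y :: qop where
  "sigma_y = (\<chi> i j. if i = j then 0 else if i = 1 then - \<i> else \<i>)"
definition sigma_z :: qop where
  "sigma_z = (\<chi> i j. if i \<noteq> j then 0 else if i = 1 then 1 else -1)"

definition pauli_dot :: "real ^ 3 \<Rightarrow> qop" where
  "pauli_dot v = v$1 *\<^sub>R sigma_x + v$2 *\<^sub>R sigma_y + v$3 *\<^sub>R sigma_z"

definition psd :: "qop \<Rightarrow> bool" where
  "psd A \<longleftrightarrow> (\<forall>v :: complex ^ 2.
      Im (\<Sum>i\<in>UNIV. cnj (v$i) * (A *v v)$i) = 0 \<and>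
      Re (\<Sum>i\<in>UNIV. cnj (v$i) * (A *v v)$i) \<ge> 0)"

definition povm :: "nat \<Rightarrow> (nat \<Rightarrow> qop) \<Rightarrow> bool" where
  "povm n P \<longleftrightarrow> (\<forall>i<n. psd (P i)) \<and> (\<Sum>i<n. P i) = mat 1"

definition simulates :: "nat \<Rightarrow> (nat \<Rightarrow> qop) \<Rightarrow> 'a set \<Rightarrow> 'x set \<Rightarrow> ('a \<Rightarrow> 'x \<Rightarrow> qop) \<Rightarrow> bool" where
  "simulates n P A X M \<longleftrightarrow> (\<exists>p :: 'a \<Rightarrow> 'x \<Rightarrow> nat \<Rightarrow> real.
      (\<forall>x\<in>X. \<forall>i<n. (\<forall>a\<in>A. p a x i \<ge> 0) \<and> (\<Sum>a\<in>A. p a x i) = 1) \<and>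
      (\<forall>x\<in>X. \<forall>a\<in>A. M a x = (\<Sum>i<n. p a x i *\<^sub>R P i)))"

definition noisy_meas :: "real \<Rightarrow> bool \<Rightarrow> real ^ 3 \<Rightarrow> qop" where
  "noisy_meas r a v = (1/2 :: real) *\<^sub>R (mat 1 + (if a then r else - r) *\<^sub>R pauli_dot v)"

definition all_dirs :: "(real ^ 3) set" where
  "all_dirs = {v. norm v = 1}"

definition planar_dirs :: "(real ^ 3) set" where
  "planar_dirs = {v. norm v = 1 \<and> v$2 = 0}"

definition R :: "nat \<Rightarrow> real" where
  "R n = Sup {r. r \<ge> 0 \<and> (\<exists>P. povm n P \<and> simulates n P UNIV all_dirs (noisy_meas r))}"

definition Rp :: "nat \<Rightarrow> real" where
  "Rp n = Sup {r. r \<ge> 0 \<and> (\<exists>P. povm n P \<and> simulates n P UNIV planar_dirs (noisy_meas r))}"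

end

theory Submission
  imports Defs
begin

text \<open>
  Write a qubit effect as \<open>w I + b\<cdot>\<sigma>\<close>: it is positive iff \<open>|b| \<le> w\<close>, a POVM has
  \<open>\<Sum> w\<^sub>i = 1\<close> and \<open>\<Sum> b\<^sub>i = 0\<close>, and simulating the noisy measurement along a unit
  vector \<open>u\<close> with response probabilities \<open>q\<^sub>i \<in> [0,1]\<close> means \<open>\<Sum> q\<^sub>i w\<^sub>i = 1/2\<close> and
  \<open>\<Sum> q\<^sub>i b\<^sub>i = (r/2) u\<close>.

  The trine (planar) and the tetrahedron, answered with probabilities \<open>(1 \<plusminus> m\<^sub>i\<cdot>u)/2\<close>,
  attain \<open>r = 1/2\<close> and \<open>r = 1/3\<close>.

  Conversely, for \<open>d + 1\<close> outcomes with Bloch vectors in \<open>\<real>\<^sup>d\<close> (\<open>d = 3\<close>, or \<open>d = 2\<close>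
  after dropping the y-component in the planar case) there is a \<open>Y\<close> with \<open>|Y| \<ge> d\<close> and
  \<open>w\<^sub>i + Y\<cdot>b\<^sub>i \<ge> 0\<close> for all \<open>i\<close>: a long normal vector if the \<open>b\<^sub>i\<close> are degenerate,
  and otherwise the solution of \<open>Y\<cdot>b\<^sub>i = -w\<^sub>i\<close> for all \<open>i\<close> except one \<open>j\<close> with
  \<open>w\<^sub>j \<le> 1/(d+1)\<close>; there \<open>Y\<cdot>b\<^sub>j = 1 - w\<^sub>j \<le> |Y| w\<^sub>j\<close> forces \<open>|Y| \<ge> d\<close>.
  Simulating along \<open>u = Y/|Y|\<close> then gives
  \<open>0 \<le> \<Sum> (1 - q\<^sub>i)(w\<^sub>i + Y\<cdot>b\<^sub>i) = 1/2 - r|Y|/2\<close>, hence \<open>r \<le> 1/d\<close>.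
\<close>

lemma quadratic_nonneg_imp_le:
  fixes \<alpha> \<delta> B :: real
  assumes "0 \<le> \<alpha>" "0 \<le> \<delta>" "0 \<le> B" and nonneg: "\<And>t. 0 \<le> \<alpha> * B - 2 * B * t + \<delta> * t\<^sup>2"
  shows "B \<le> \<alpha> * \<delta>"
proof (cases "B = 0")
  case True
  then show ?thesis using assms(1,2) by simp
next
  case False
  then have "0 < B" using assms(3) by simp
  show ?thesis
  proof (cases "\<delta> = 0")
    case True
    have "0 \<le> \<alpha> * B - 2 * B * ((\<alpha> * B + 1) / (2 * B))"
      using nonneg[of "(\<alpha> * B + 1) / (2 * B)"] True by simp
    also have "\<dots> = -1" using \<open>0 < B\<close> by (simp add: field_simps)
    finally show ?thesis by simp
  next
    case False
    then have "0 < \<delta>" using assms(2) by simp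
    have "0 \<le> \<alpha> * B - 2 * B * (B / \<delta>) + \<delta> * (B / \<delta>)\<^sup>2" by (rule nonneg)
    also have "\<dots> = B * (\<alpha> * \<delta> - B) / \<delta>"
      using \<open>0 < \<delta>\<close> by (simp add: field_simps power2_eq_square)
    finally show ?thesis
      using \<open>0 < B\<close> \<open>0 < \<delta>\<close> by (simp add: zero_le_divide_iff zero_le_mult_iff)
  qed
qed

lemma two_mul_le_quadratic:
  fixes \<alpha> \<delta> b x y :: real
  assumes "0 \<le> \<alpha>" "0 \<le> \<delta>" "b\<^sup>2 \<le> \<alpha> * \<delta>"
  shows "2 * b * x * y \<le> \<alpha> * x\<^sup>2 + \<delta> * y\<^sup>2"
proof (cases "\<alpha> = 0")
  case True
  then have "b = 0" using assms(3) by simp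
  then show ?thesis using True assms(2) by simp
next
  case False
  then have "0 < \<alpha>" using assms(1) by simp
  have "\<alpha> * (\<alpha> * x\<^sup>2 + \<delta> * y\<^sup>2 - 2 * b * x * y) = (\<alpha> * x - b * y)\<^sup>2 + (\<alpha> * \<delta> - b\<^sup>2) * y\<^sup>2"
    by (simp add: power2_eq_square algebra_simps)
  also have "\<dots> \<ge> 0" using assms(3) by simp
  finally show ?thesis using \<open>0 < \<alpha>\<close> by (simp add: zero_le_mult_iff)
qed

lemma exists_le_average:
  fixes a :: "'i \<Rightarrow> real"
  assumes "finite I" "I \<noteq> {}" "sum a I = 1"
  obtains j where "j \<in> I" "a j \<le> 1 / card I"
proof -
  have "\<exists>j\<in>I. a j \<le> 1 / card I"
  proof (rule ccontr)
    assume "\<not> ?thesis"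
    then have "(\<Sum>j\<in>I. 1 / card I) < sum a I"
      using assms(1,2) by (intro sum_strict_mono) (auto simp: not_le)
    with assms show False by simp
  qed
  with that show thesis by blast
qed

lemma exists_inner_eq_on_independent:
  fixes b :: "'i \<Rightarrow> 'a::euclidean_space"
  assumes "independent (b ` J)" "inj_on b J"
  obtains Y where "\<And>i. i \<in> J \<Longrightarrow> Y \<bullet> b i = c i"
proof -
  obtain g :: "'a \<Rightarrow> real" where g: "linear g" "\<And>x. x \<in> b ` J \<Longrightarrow> g x = c (inv_into J b x)"
    using linear_independent_extend[OF assms(1), of "\<lambda>x. c (inv_into J b x)"] by auto
  have "adjoint g 1 \<bullet> b i = c i" if "i \<in> J" for i
  proof -
    have "adjoint g 1 \<bullet> b i = g (b i)"
      using adjoint_works[OF g(1), of "b i" 1] by (simp add: inner_commute)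
    also have "\<dots> = c i"
      using g(2) that assms(2) by simp
    finally show ?thesis .
  qed
  then show thesis by (rule that)
qed

lemma exists_orthogonal_of_norm:
  fixes S :: "'a::euclidean_space set"
  assumes "dim S < DIM('a)" "0 \<le> c"
  obtains Y where "norm Y = c" "\<And>x. x \<in> span S \<Longrightarrow> Y \<bullet> x = 0"
proof -
  obtain Y0 where "Y0 \<noteq> 0" "\<And>x. x \<in> span S \<Longrightarrow> orthogonal Y0 x"
    using orthogonal_to_subspace_exists[OF assms(1)] by blast
  then show thesis
    using that[of "(c / norm Y0) *\<^sub>R Y0"] assms(2) by (simp add: orthogonal_def)
qed

lemma independent_image_if_dim_eq_card:
  fixes b :: "'i \<Rightarrow> 'a::euclidean_space"
  assumes "finite J" "dim (b ` J) = card J"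
  shows "inj_on b J" "independent (b ` J)"
proof -
  have "dim (b ` J) \<le> card (b ` J)" "card (b ` J) \<le> card J"
    using assms(1) by (simp_all add: dim_le_card' card_image_le)
  then have "card (b ` J) = card J" "card (b ` J) = dim (b ` J)"
    using assms(2) by linarith+
  then show "inj_on b J" "independent (b ` J)"
    using inj_on_iff_eq_card[OF assms(1), of b] card_eq_dim[of "b ` J" "b ` J"] assms(1)
    by (simp_all add: span_superset)
qed

lemma norm_ge_if_inner_eq:
  fixes Y x :: "'a::real_inner" and d :: nat
  assumes "Y \<bullet> x = 1 - t" "norm x \<le> t" "t \<le> 1 / (d + 1)"
  shows "d \<le> norm Y"
proof -
  have "0 < t"
  proof (rule ccontr)
    assume "\<not> 0 < t"
    then have "norm x \<le> 0" using assms(2) by linarith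
    then have "x = 0" by simp
    then show False using assms(1) \<open>\<not> 0 < t\<close> by simp
  qed
  have "d * t \<le> 1 - t" using assms(3) by (simp add: field_simps)
  also have "\<dots> \<le> norm Y * norm x" using norm_cauchy_schwarz[of Y x] assms(1) by simp
  also have "\<dots> \<le> norm Y * t" using assms(2) by (simp add: mult_left_mono)
  finally show ?thesis using \<open>0 < t\<close> by simp
qed

lemma exists_long_vector_in_polyhedron:
  fixes b :: "'i \<Rightarrow> 'a::euclidean_space"
  assumes I: "finite I" "card I = DIM('a) + 1"
    and norm_le: "\<And>i. i \<in> I \<Longrightarrow> norm (b i) \<le> a i"
    and sums: "sum a I = 1" "sum b I = 0"
  obtains Y where "DIM('a) \<le> norm Y" "\<And>i. i \<in> I \<Longrightarrow> 0 \<le> a i + Y \<bullet> b i"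
proof -
  have "I \<noteq> {}" using I by auto
  then obtain j where j: "j \<in> I" "a j \<le> 1 / card I"
    using exists_le_average I(1) sums(1) by blast
  define J where "J = I - {j}"
  have J: "finite J" "card J = DIM('a)" using I j by (auto simp: J_def)
  have split: "sum f I = f j + sum f J" for f :: "'i \<Rightarrow> 'b::comm_monoid_add"
    unfolding J_def using I(1) j(1) by (rule sum.remove)
  have bj: "b j = - sum b J" using sums(2) split[of b] by (simp add: eq_neg_iff_add_eq_0)
  show thesis
  proof (cases "dim (b ` J) < DIM('a)")
    case True
    then obtain Y where Y: "norm Y = DIM('a)" "\<And>x. x \<in> span (b ` J) \<Longrightarrow> Y \<bullet> x = 0"
      using exists_orthogonal_of_norm[of "b ` J" "DIM('a)"] by auto
    have "sum b J \<in> span (b ` J)" by (intro span_sum) (simp add: span_base)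
    then have "b i \<in> span (b ` J)" if "i \<in> I" for i
      using that bj by (cases "i = j") (simp_all add: span_neg J_def span_base)
    then have "0 \<le> a i + Y \<bullet> b i" if "i \<in> I" for i
      using Y(2) order_trans[OF norm_ge_zero norm_le[OF that]] that by simp
    with Y(1) show thesis using that[of Y] by simp
  next
    case False
    then have "dim (b ` J) = card J" using J(2) dim_subset_UNIV[of "b ` J"] by linarith
    note full = independent_image_if_dim_eq_card[OF J(1) this]
    obtain Y where Y: "\<And>i. i \<in> J \<Longrightarrow> Y \<bullet> b i = - a i"
      using exists_inner_eq_on_independent[OF full(2,1), of "\<lambda>i. - a i"] by blast
    have "Y \<bullet> b j = - (\<Sum>i\<in>J. Y \<bullet> b i)" by (simp add: bj inner_sum_right)
    also have "\<dots> = 1 - a j" using Y sums(1) split[of a] by (simp add: sum_negf)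
    finally have Yj: "Y \<bullet> b j = 1 - a j" .
    have "DIM('a) \<le> norm Y"
      using norm_ge_if_inner_eq[OF Yj norm_le[OF j(1)]] j(2) I(2) by simp
    moreover have "0 \<le> a i + Y \<bullet> b i" if "i \<in> I" for i
      using that Y Yj by (cases "i = j") (simp_all add: J_def)
    ultimately show thesis by (rule that)
  qed
qed

lemma simulation_dual_bound:
  fixes b :: "'i \<Rightarrow> 'a::real_inner"
  assumes "finite I" "\<And>i. i \<in> I \<Longrightarrow> 0 \<le> q i \<and> q i \<le> 1"
    "\<And>i. i \<in> I \<Longrightarrow> 0 \<le> a i + Y \<bullet> b i"
    "sum a I = 1" "sum b I = 0"
    "(\<Sum>i\<in>I. q i * a i) = 1/2" "(\<Sum>i\<in>I. q i *\<^sub>R b i) = (r/2) *\<^sub>R u"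
  shows "r * (Y \<bullet> u) \<le> 1"
proof -
  have "0 \<le> (\<Sum>i\<in>I. (1 - q i) * (a i + Y \<bullet> b i))"
    using assms(2,3) by (intro sum_nonneg mult_nonneg_nonneg) auto
  also have "\<dots> = sum a I + Y \<bullet> sum b I - (\<Sum>i\<in>I. q i * a i) - Y \<bullet> (\<Sum>i\<in>I. q i *\<^sub>R b i)"
    by (simp add: algebra_simps sum.distrib sum_subtractf inner_sum_right)
  also have "\<dots> = 1/2 - r * (Y \<bullet> u) / 2"
    using assms(4-7) by simp
  finally show ?thesis by simp
qed

lemma simulation_radius_le_inverse_DIM:
  fixes b :: "'i \<Rightarrow> 'a::euclidean_space"
  assumes I: "finite I" "card I = DIM('a) + 1"
    and bloch: "\<And>i. i \<in> I \<Longrightarrow> norm (b i) \<le> a i" "sum a I = 1" "sum b I = 0"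
    and sim: "\<And>u. norm u = 1 \<Longrightarrow> \<exists>q. (\<forall>i\<in>I. 0 \<le> q i \<and> q i \<le> 1) \<and>
                 (\<Sum>i\<in>I. q i * a i) = 1/2 \<and> (\<Sum>i\<in>I. q i *\<^sub>R b i) = (r/2) *\<^sub>R u"
  shows "r \<le> 1 / DIM('a)"
proof -
  obtain Y where Y: "DIM('a) \<le> norm Y" "\<And>i. i \<in> I \<Longrightarrow> 0 \<le> a i + Y \<bullet> b i"
    using exists_long_vector_in_polyhedron[OF I bloch] by blast
  have "(0::real) < DIM('a)" by simp
  with Y(1) have "0 < norm Y" by linarith
  define u where "u = Y /\<^sub>R norm Y"
  have "norm u = 1" using \<open>0 < norm Y\<close> by (simp add: u_def)
  then obtain q where q: "\<forall>i\<in>I. 0 \<le> q i \<and> q i \<le> 1" "(\<Sum>i\<in>I. q i * a i) = 1/2"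
      "(\<Sum>i\<in>I. q i *\<^sub>R b i) = (r/2) *\<^sub>R u"
    using sim by blast
  have "r * (Y \<bullet> u) \<le> 1"
    using q by (intro simulation_dual_bound[OF I(1) _ Y(2) bloch(2,3)]) auto
  moreover have "Y \<bullet> u = norm Y"
    using \<open>0 < norm Y\<close> by (simp add: u_def dot_square_norm power2_eq_square)
  ultimately have "r * norm Y \<le> 1" by simp
  have "r * DIM('a) \<le> 1"
  proof (cases "0 < r")
    case True
    then have "r * DIM('a) \<le> r * norm Y" using Y(1) by simp
    with \<open>r * norm Y \<le> 1\<close> show ?thesis by linarith
  next
    case False
    then have "r * DIM('a) \<le> 0" by (simp add: mult_nonpos_nonneg)
    then show ?thesis by linarith
  qed
  then show ?thesis using \<open>(0::real) < DIM('a)\<close> by (simp add: pos_le_divide_eq)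
qed

lemma quadratic_form_2x2:
  "(\<Sum>i\<in>UNIV. cnj (v$i) * ((A::qop) *v v)$i) =
     cnj (v$1) * (A$1$1 * v$1 + A$1$2 * v$2) + cnj (v$2) * (A$2$1 * v$1 + A$2$2 * v$2)"
  by (simp add: sum_2 matrix_vector_mult_def)

lemma psd_iff_forms:
  "psd A \<longleftrightarrow> (\<forall>z w. Im (cnj z * (A$1$1 * z + A$1$2 * w) + cnj w * (A$2$1 * z + A$2$2 * w)) = 0
                \<and> 0 \<le> Re (cnj z * (A$1$1 * z + A$1$2 * w) + cnj w * (A$2$1 * z + A$2$2 * w)))"
  (is "_ \<longleftrightarrow> (\<forall>z w. ?P z w)")
proof
  assume "psd A"
  show "\<forall>z w. ?P z w"
  proof (intro allI)
    fix z w
    from \<open>psd A\<close> have "?P ((vector [z, w] :: complex^2)$1) ((vector [z, w] :: complex^2)$2)"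
      unfolding psd_def quadratic_form_2x2 by (rule allE)
    then show "?P z w" by simp
  qed
next
  assume "\<forall>z w. ?P z w"
  then show "psd A" unfolding psd_def quadratic_form_2x2 by simp
qed

lemma hermitian_quadratic_form:
  assumes "A$2$1 = cnj (A$1$2)" "Im (A$1$1) = 0" "Im (A$2$2) = 0"
  shows "cnj z * (A$1$1 * z + A$1$2 * w) + cnj w * (A$2$1 * z + A$2$2 * w) =
    of_real (Re (A$1$1) * (cmod z)\<^sup>2 + Re (A$2$2) * (cmod w)\<^sup>2 + 2 * Re (cnj z * A$1$2 * w))"
  using assms
  by (simp add: complex_eq_iff cmod_power2[unfolded power2_eq_square] power2_eq_square algebra_simps)

lemma psd_imp_entries:
  assumes "psd A"
  shows "A$2$1 = cnj (A$1$2)" "Im (A$1$1) = 0" "Im (A$2$2) = 0" "0 \<le> Re (A$1$1)" "0 \<le> Re (A$2$2)"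
    "(cmod (A$1$2))\<^sup>2 \<le> Re (A$1$1) * Re (A$2$2)"
proof -
  let ?Q = "\<lambda>z w. cnj z * (A$1$1 * z + A$1$2 * w) + cnj w * (A$2$1 * z + A$2$2 * w)"
  have form: "Im (?Q z w) = 0 \<and> 0 \<le> Re (?Q z w)" for z w
    using assms unfolding psd_iff_forms by blast
  from form[of 1 0] form[of 0 1] show diag: "Im (A$1$1) = 0" "Im (A$2$2) = 0"
    "0 \<le> Re (A$1$1)" "0 \<le> Re (A$2$2)" by simp_all
  from form[of 1 1] form[of 1 \<i>] diag show herm: "A$2$1 = cnj (A$1$2)"
    by (simp add: complex_eq_iff)
  have "0 \<le> Re (A$1$1) * (cmod (A$1$2))\<^sup>2 - 2 * (cmod (A$1$2))\<^sup>2 * t + Re (A$2$2) * t\<^sup>2" for t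
    using form[of "A$1$2" "- of_real t"] unfolding hermitian_quadratic_form[OF herm diag(1,2)]
    by (simp add: cmod_power2[unfolded power2_eq_square] power2_eq_square algebra_simps)
  then show "(cmod (A$1$2))\<^sup>2 \<le> Re (A$1$1) * Re (A$2$2)"
    using quadratic_nonneg_imp_le diag(3,4) by simp
qed

lemma psd_if_entries:
  assumes herm: "A$2$1 = cnj (A$1$2)" "Im (A$1$1) = 0" "Im (A$2$2) = 0"
    and pos: "0 \<le> Re (A$1$1)" "0 \<le> Re (A$2$2)" "(cmod (A$1$2))\<^sup>2 \<le> Re (A$1$1) * Re (A$2$2)"
  shows "psd A"
  unfolding psd_iff_forms hermitian_quadratic_form[OF herm]
proof (intro allI conjI)
  fix z w
  have "- Re (cnj z * A$1$2 * w) \<le> cmod z * cmod (A$1$2) * cmod w"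
    using abs_Re_le_cmod[of "cnj z * A$1$2 * w"] by (simp add: norm_mult)
  moreover have "2 * cmod (A$1$2) * cmod z * cmod w \<le> Re (A$1$1) * (cmod z)\<^sup>2 + Re (A$2$2) * (cmod w)\<^sup>2"
    using pos by (rule two_mul_le_quadratic)
  ultimately show "0 \<le> Re (of_real (Re (A$1$1) * (cmod z)\<^sup>2 + Re (A$2$2) * (cmod w)\<^sup>2
      + 2 * Re (cnj z * A$1$2 * w)))"
    by (simp add: algebra_simps)
qed simp

lemma psd_iff_entries:
  "psd A \<longleftrightarrow> A$2$1 = cnj (A$1$2) \<and> Im (A$1$1) = 0 \<and> Im (A$2$2) = 0 \<and>
     0 \<le> Re (A$1$1) \<and> 0 \<le> Re (A$2$2) \<and> (cmod (A$1$2))\<^sup>2 \<le> Re (A$1$1) * Re (A$2$2)"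
proof
  assume "psd A"
  then show "A$2$1 = cnj (A$1$2) \<and> Im (A$1$1) = 0 \<and> Im (A$2$2) = 0 \<and>
     0 \<le> Re (A$1$1) \<and> 0 \<le> Re (A$2$2) \<and> (cmod (A$1$2))\<^sup>2 \<le> Re (A$1$1) * Re (A$2$2)"
    using psd_imp_entries by blast
qed (elim conjE, rule psd_if_entries)

definition bloch_op :: "real \<Rightarrow> real^3 \<Rightarrow> qop" where
  "bloch_op w b = w *\<^sub>R mat 1 + pauli_dot b"

definition bloch_weight :: "qop \<Rightarrow> real" where
  "bloch_weight A = Re (A$1$1 + A$2$2) / 2"

definition bloch_vector :: "qop \<Rightarrow> real^3" where
  "bloch_vector A = vector [Re (A$1$2), - Im (A$1$2), Re (A$1$1 - A$2$2) / 2]"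

lemma bloch_op_entries:
  "bloch_op w b $1$1 = of_real (w + b$3)" "bloch_op w b $2$2 = of_real (w - b$3)"
  "bloch_op w b $1$2 = Complex (b$1) (- b$2)" "bloch_op w b $2$1 = Complex (b$1) (b$2)"
  by (simp_all add: bloch_op_def pauli_dot_def sigma_x_def sigma_y_def sigma_z_def mat_def
      complex_eq_iff)

lemma bloch_weight_bloch_op [simp]: "bloch_weight (bloch_op w b) = w"
  by (simp add: bloch_weight_def bloch_op_entries)

lemma bloch_vector_bloch_op [simp]: "bloch_vector (bloch_op w b) = b"
  by (simp add: bloch_vector_def bloch_op_entries vec_eq_iff forall_3)

lemma bloch_op_bloch:
  assumes "A$2$1 = cnj (A$1$2)" "Im (A$1$1) = 0" "Im (A$2$2) = 0"
  shows "bloch_op (bloch_weight A) (bloch_vector A) = A"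
  using assms by (simp add: vec_eq_iff forall_2 bloch_op_entries bloch_weight_def bloch_vector_def
      complex_eq_iff field_simps)

lemma linear_pauli_dot: "linear pauli_dot"
  by (rule linearI) (simp_all add: pauli_dot_def algebra_simps)

lemma linear_bloch_weight: "linear bloch_weight"
  by (rule linearI) (simp_all add: bloch_weight_def field_simps)

lemma linear_bloch_vector: "linear bloch_vector"
  by (rule linearI) (simp_all add: bloch_vector_def vec_eq_iff forall_3 field_simps)

lemma sum_scaleR_bloch_op:
  "(\<Sum>i\<in>I. c i *\<^sub>R bloch_op (w i) (b i)) = bloch_op (\<Sum>i\<in>I. c i * w i) (\<Sum>i\<in>I. c i *\<^sub>R b i)"
  by (simp add: bloch_op_def scaleR_add_right sum.distrib scaleR_sum_left
      linear_sum[OF linear_pauli_dot] linear_scale[OF linear_pauli_dot])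

lemma mat_1_eq_bloch_op: "mat 1 = bloch_op 1 0"
  by (simp add: bloch_op_def linear_0[OF linear_pauli_dot])

lemma noisy_meas_eq_bloch_op:
  "noisy_meas r a v = bloch_op (1/2) ((if a then r/2 else - r/2) *\<^sub>R v)"
  by (simp add: noisy_meas_def bloch_op_def scaleR_add_right linear_scale[OF linear_pauli_dot])

lemma norm_le_iff_components:
  "norm (b::real^3) \<le> w \<longleftrightarrow> 0 \<le> w \<and> (b$1)\<^sup>2 + (b$2)\<^sup>2 + (b$3)\<^sup>2 \<le> w\<^sup>2"
  by (simp add: norm_le_square inner_vec_def sum_3 power2_eq_square)

lemma psd_bloch_op_iff: "psd (bloch_op w b) \<longleftrightarrow> norm b \<le> w"
proof -
  have "(w + b$3) * (w - b$3) = w\<^sup>2 - (b$3)\<^sup>2" by (simp add: power2_eq_square algebra_simps)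
  moreover have "\<bar>b$3\<bar> \<le> w" if "norm b \<le> w"
    using component_le_norm_cart[of b 3] that by linarith
  ultimately show ?thesis
    unfolding psd_iff_entries bloch_op_entries norm_le_iff_components
    by (auto simp: cmod_power2 complex_eq_iff)
qed

lemma psd_imp_norm_bloch_vector_le:
  assumes "psd A"
  shows "norm (bloch_vector A) \<le> bloch_weight A"
proof -
  have "bloch_op (bloch_weight A) (bloch_vector A) = A"
    using assms by (intro bloch_op_bloch) (simp_all add: psd_iff_entries)
  with assms show ?thesis using psd_bloch_op_iff by metis
qed

lemma povm_bloch_coordinates:
  assumes "povm n P"
  shows "\<And>i. i < n \<Longrightarrow> norm (bloch_vector (P i)) \<le> bloch_weight (P i)"
    and "(\<Sum>i<n. bloch_weight (P i)) = 1" "(\<Sum>i<n. bloch_vector (P i)) = 0"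
proof -
  have psd: "\<And>i. i < n \<Longrightarrow> psd (P i)" and sum: "(\<Sum>i<n. P i) = bloch_op 1 0"
    using assms by (simp_all add: povm_def mat_1_eq_bloch_op)
  show "\<And>i. i < n \<Longrightarrow> norm (bloch_vector (P i)) \<le> bloch_weight (P i)"
    by (rule psd_imp_norm_bloch_vector_le[OF psd])
  show "(\<Sum>i<n. bloch_weight (P i)) = 1"
    using arg_cong[OF sum, of bloch_weight] by (simp add: linear_sum[OF linear_bloch_weight])
  show "(\<Sum>i<n. bloch_vector (P i)) = 0"
    using arg_cong[OF sum, of bloch_vector] by (simp add: linear_sum[OF linear_bloch_vector])
qed

lemma simulates_noisy_meas_bloch:
  assumes "simulates n P UNIV X (noisy_meas r)" "v \<in> X"
  obtains q where "\<And>i. i < n \<Longrightarrow> 0 \<le> q i \<and> q i \<le> 1"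
    "(\<Sum>i<n. q i * bloch_weight (P i)) = 1/2" "(\<Sum>i<n. q i *\<^sub>R bloch_vector (P i)) = (r/2) *\<^sub>R v"
proof -
  obtain p :: "bool \<Rightarrow> real^3 \<Rightarrow> nat \<Rightarrow> real" where
    p: "\<forall>x\<in>X. \<forall>i<n. (\<forall>a\<in>UNIV. 0 \<le> p a x i) \<and> (\<Sum>a\<in>UNIV. p a x i) = 1"
    and M: "\<forall>x\<in>X. \<forall>a\<in>UNIV. noisy_meas r a x = (\<Sum>i<n. p a x i *\<^sub>R P i)"
    using assms(1) unfolding simulates_def by blast
  have M: "noisy_meas r True v = (\<Sum>i<n. p True v i *\<^sub>R P i)"
    using M assms(2) by blast
  have "0 \<le> p True v i \<and> p True v i \<le> 1" if "i < n" for i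
  proof -
    have "0 \<le> p True v i" "0 \<le> p False v i" "p False v i + p True v i = 1"
      using p assms(2) that by (simp_all add: UNIV_bool)
    then show ?thesis by linarith
  qed
  moreover have "bloch_weight (noisy_meas r True v) = 1/2"
    "bloch_vector (noisy_meas r True v) = (r/2) *\<^sub>R v"
    by (simp_all add: noisy_meas_eq_bloch_op)
  then have "(\<Sum>i<n. p True v i * bloch_weight (P i)) = 1/2"
    "(\<Sum>i<n. p True v i *\<^sub>R bloch_vector (P i)) = (r/2) *\<^sub>R v"
    unfolding M by (simp_all add: linear_sum[OF linear_bloch_weight] linear_sum[OF linear_bloch_vector]
        linear_scale[OF linear_bloch_weight] linear_scale[OF linear_bloch_vector])
  ultimately show thesis by (rule that)
qed

definition xz_part :: "real^3 \<Rightarrow> real^2" where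
  "xz_part v = vector [v$1, v$3]"

definition xz_embed :: "real^2 \<Rightarrow> real^3" where
  "xz_embed u = vector [u$1, 0, u$2]"

lemma linear_xz_part: "linear xz_part"
  by (rule linearI) (simp_all add: xz_part_def vec_eq_iff forall_2)

lemma xz_part_xz_embed [simp]: "xz_part (xz_embed u) = u"
  by (simp add: xz_part_def xz_embed_def vec_eq_iff forall_2)

lemma norm_xz_part_le: "norm (xz_part v) \<le> norm v"
  by (simp add: xz_part_def norm_eq_sqrt_inner inner_vec_def sum_2 sum_3)

lemma norm_xz_embed [simp]: "norm (xz_embed u) = norm u"
  by (simp add: xz_embed_def norm_eq_sqrt_inner inner_vec_def sum_2 sum_3)

lemma xz_embed_in_planar_dirs:
  assumes "norm u = 1"
  shows "xz_embed u \<in> planar_dirs"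
proof -
  have "xz_embed u $ 2 = 0" by (simp add: xz_embed_def)
  with assms show ?thesis by (simp add: planar_dirs_def)
qed

lemma simulation_radius_le_4_outcomes:
  assumes "povm 4 P" "simulates 4 P UNIV all_dirs (noisy_meas r)"
  shows "r \<le> 1/3"
proof -
  have "r \<le> 1 / DIM(real^3)"
  proof (rule simulation_radius_le_inverse_DIM[where I = "{..<4}" and b = "\<lambda>i. bloch_vector (P i)"])
    fix u :: "real^3" assume "norm u = 1"
    then have "u \<in> all_dirs" by (simp add: all_dirs_def)
    then obtain q where "\<And>i. i < 4 \<Longrightarrow> 0 \<le> q i \<and> q i \<le> 1"
      "(\<Sum>i<4. q i * bloch_weight (P i)) = 1/2" "(\<Sum>i<4. q i *\<^sub>R bloch_vector (P i)) = (r/2) *\<^sub>R u"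
      using simulates_noisy_meas_bloch[OF assms(2)] by blast
    then show "\<exists>q. (\<forall>i\<in>{..<4}. 0 \<le> q i \<and> q i \<le> 1) \<and> (\<Sum>i<4. q i * bloch_weight (P i)) = 1/2
        \<and> (\<Sum>i<4. q i *\<^sub>R bloch_vector (P i)) = (r/2) *\<^sub>R u"
      by auto
  qed (use povm_bloch_coordinates[OF assms(1)] in auto)
  then show ?thesis by simp
qed

lemma planar_simulation_radius_le_3_outcomes:
  assumes "povm 3 P" "simulates 3 P UNIV planar_dirs (noisy_meas r)"
  shows "r \<le> 1/2"
proof -
  have "r \<le> 1 / DIM(real^2)"
  proof (rule simulation_radius_le_inverse_DIM[where I = "{..<3}" and b = "\<lambda>i. xz_part (bloch_vector (P i))"])
    fix u :: "real^2" assume "norm u = 1"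
    then obtain q where q: "\<And>i. i < 3 \<Longrightarrow> 0 \<le> q i \<and> q i \<le> 1"
      "(\<Sum>i<3. q i * bloch_weight (P i)) = 1/2"
      "(\<Sum>i<3. q i *\<^sub>R bloch_vector (P i)) = (r/2) *\<^sub>R xz_embed u"
      using simulates_noisy_meas_bloch[OF assms(2) xz_embed_in_planar_dirs] by blast
    have "(\<Sum>i<3. q i *\<^sub>R xz_part (bloch_vector (P i))) = xz_part (\<Sum>i<3. q i *\<^sub>R bloch_vector (P i))"
      by (simp add: linear_sum[OF linear_xz_part] linear_scale[OF linear_xz_part])
    also have "\<dots> = (r/2) *\<^sub>R u"
      by (simp add: q(3) linear_scale[OF linear_xz_part])
    finally show "\<exists>q. (\<forall>i\<in>{..<3}. 0 \<le> q i \<and> q i \<le> 1) \<and> (\<Sum>i<3. q i * bloch_weight (P i)) = 1/2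
        \<and> (\<Sum>i<3. q i *\<^sub>R xz_part (bloch_vector (P i))) = (r/2) *\<^sub>R u"
      using q(1,2) by auto
  next
    show "(\<Sum>i<3. xz_part (bloch_vector (P i))) = 0"
      using povm_bloch_coordinates(3)[OF assms(1)]
      by (simp add: linear_0[OF linear_xz_part] flip: linear_sum[OF linear_xz_part])
  next
    show "norm (xz_part (bloch_vector (P i))) \<le> bloch_weight (P i)" if "i \<in> {..<3}" for i
      using norm_xz_part_le povm_bloch_coordinates(1)[OF assms(1)] that by (force intro: order_trans)
  qed (use povm_bloch_coordinates[OF assms(1)] in auto)
  then show ?thesis by simp
qed

definition uniform_povm :: "nat \<Rightarrow> (nat \<Rightarrow> real^3) \<Rightarrow> nat \<Rightarrow> qop" where
  "uniform_povm n m i = bloch_op (1/n) ((1/n) *\<^sub>R m i)"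

lemma povm_uniform_povm:
  assumes "0 < n" "\<And>i. i < n \<Longrightarrow> norm (m i) \<le> 1" "(\<Sum>i<n. m i) = 0"
  shows "povm n (uniform_povm n m)"
  unfolding povm_def
proof safe
  fix i assume "i < n"
  then show "psd (uniform_povm n m i)"
    using assms(2) by (simp add: uniform_povm_def psd_bloch_op_iff divide_right_mono)
next
  have "(\<Sum>i<n. uniform_povm n m i) = (\<Sum>i<n. 1 *\<^sub>R uniform_povm n m i)" by simp
  also have "\<dots> = bloch_op (\<Sum>i<n. 1 * (1/n)) (\<Sum>i<n. 1 *\<^sub>R ((1/n) *\<^sub>R m i))"
    unfolding uniform_povm_def by (rule sum_scaleR_bloch_op)
  also have "\<dots> = bloch_op 1 ((1/n) *\<^sub>R (\<Sum>i<n. m i))"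
    using assms(1) by (simp add: scaleR_sum_right)
  finally show "(\<Sum>i<n. uniform_povm n m i) = mat 1"
    by (simp add: assms(3) mat_1_eq_bloch_op)
qed

lemma simulates_uniform_povm:
  assumes "0 < n" "\<And>i. i < n \<Longrightarrow> norm (m i) \<le> 1" "(\<Sum>i<n. m i) = 0"
    and X: "\<And>v. v \<in> X \<Longrightarrow> norm v = 1" "\<And>v. v \<in> X \<Longrightarrow> (\<Sum>i<n. (m i \<bullet> v) *\<^sub>R m i) = (n * r) *\<^sub>R v"
  shows "simulates n (uniform_povm n m) UNIV X (noisy_meas r)"
  unfolding simulates_def
proof (intro exI[of _ "\<lambda>a v i. (1 + (if a then 1 else -1) * (m i \<bullet> v)) / 2"] conjI ballI allI impI)
  fix v i a assume "v \<in> X" "i < n"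
  have "\<bar>m i \<bullet> v\<bar> \<le> norm (m i) * norm v" by (rule Cauchy_Schwarz_ineq2)
  also have "\<dots> \<le> 1" using assms(2)[OF \<open>i < n\<close>] X(1)[OF \<open>v \<in> X\<close>] by simp
  finally show "0 \<le> (1 + (if a then 1 else -1) * (m i \<bullet> v)) / 2" by auto
next
  fix v i
  show "(\<Sum>a\<in>UNIV. (1 + (if a then 1 else -1) * (m i \<bullet> v)) / 2) = 1"
    by (simp add: UNIV_bool field_simps)
next
  fix v a assume "v \<in> X"
  define s :: real where "s = (if a then 1 else -1)"
  have weight: "(\<Sum>i<n. (1 + s * (m i \<bullet> v)) / 2 * (1/n)) = 1/2"
  proof -
    have "(\<Sum>i<n. (1 + s * (m i \<bullet> v)) / 2 * (1/n)) = (n + s * ((\<Sum>i<n. m i) \<bullet> v)) / (2 * n)"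
      by (simp add: sum.distrib sum_distrib_left inner_sum_left flip: sum_divide_distrib)
    then show ?thesis using assms(1,3) by simp
  qed
  have vec: "(\<Sum>i<n. ((1 + s * (m i \<bullet> v)) / 2) *\<^sub>R ((1/n) *\<^sub>R m i)) = (s * r / 2) *\<^sub>R v"
  proof -
    have "(\<Sum>i<n. ((1 + s * (m i \<bullet> v)) / 2) *\<^sub>R ((1/n) *\<^sub>R m i))
        = (1 / (2 * n)) *\<^sub>R ((\<Sum>i<n. m i) + s *\<^sub>R (\<Sum>i<n. (m i \<bullet> v) *\<^sub>R m i))"
      by (simp add: add_divide_distrib scaleR_add_left scaleR_add_right sum.distrib scaleR_sum_right)
    then show ?thesis using assms(1,3) X(2)[OF \<open>v \<in> X\<close>] by simp
  qed
  have "noisy_meas r a v = bloch_op (1/2) ((s * r / 2) *\<^sub>R v)"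
    by (simp add: noisy_meas_eq_bloch_op s_def)
  also have "\<dots> = bloch_op (\<Sum>i<n. (1 + s * (m i \<bullet> v)) / 2 * (1/n))
      (\<Sum>i<n. ((1 + s * (m i \<bullet> v)) / 2) *\<^sub>R ((1/n) *\<^sub>R m i))"
    by (simp only: weight vec)
  also have "\<dots> = (\<Sum>i<n. ((1 + s * (m i \<bullet> v)) / 2) *\<^sub>R uniform_povm n m i)"
    unfolding uniform_povm_def by (rule sum_scaleR_bloch_op[symmetric])
  finally show "noisy_meas r a v = (\<Sum>i<n. ((1 + (if a then 1 else -1) * (m i \<bullet> v)) / 2) *\<^sub>R uniform_povm n m i)"
    unfolding s_def .
qed

lemma sum_lessThan_4: "(\<Sum>i<4::nat. f i) = f 0 + f 1 + f 2 + (f 3 :: 'a::comm_monoid_add)"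
  by (simp add: numeral_eq_Suc add.assoc)

lemma sum_lessThan_3: "(\<Sum>i<3::nat. f i) = f 0 + f 1 + (f 2 :: 'a::comm_monoid_add)"
  by (simp add: numeral_eq_Suc add.assoc)

definition tetrahedron :: "nat \<Rightarrow> real^3" where
  "tetrahedron i = (1 / sqrt 3) *\<^sub>R
     [vector [1, 1, 1], vector [1, -1, -1], vector [-1, 1, -1], vector [-1, -1, 1]] ! i"

definition trine :: "nat \<Rightarrow> real^3" where
  "trine i = [vector [0, 0, 1], vector [sqrt 3 / 2, 0, -1/2], vector [- sqrt 3 / 2, 0, -1/2]] ! i"

lemma norm_vector_3: "norm (vector [x, y, z] :: real^3) = sqrt (x\<^sup>2 + y\<^sup>2 + z\<^sup>2)"
  by (simp add: norm_eq_sqrt_inner inner_vec_def sum_3 power2_eq_square)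

lemma norm_tetrahedron: "i < 4 \<Longrightarrow> norm (tetrahedron i) = 1"
  by (auto simp: tetrahedron_def norm_vector_3 less_Suc_eq numeral_eq_Suc)

lemma sum_tetrahedron: "(\<Sum>i<4. tetrahedron i) = 0"
  by (simp add: sum_lessThan_4 tetrahedron_def vec_eq_iff forall_3)

lemma tetrahedron_frame: "(\<Sum>i<4. (tetrahedron i \<bullet> v) *\<^sub>R tetrahedron i) = (4 * (1/3)) *\<^sub>R v"
  by (simp add: sum_lessThan_4 tetrahedron_def vec_eq_iff forall_3 inner_vec_def sum_3 field_simps)

lemma norm_trine: "i < 3 \<Longrightarrow> norm (trine i) = 1"
  by (auto simp: trine_def norm_vector_3 less_Suc_eq numeral_eq_Suc power_divide)

lemma sum_trine: "(\<Sum>i<3. trine i) = 0"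
  by (simp add: sum_lessThan_3 trine_def vec_eq_iff forall_3)

lemma trine_frame: "v$2 = 0 \<Longrightarrow> (\<Sum>i<3. (trine i \<bullet> v) *\<^sub>R trine i) = (3 * (1/2)) *\<^sub>R v"
  by (simp add: sum_lessThan_3 trine_def vec_eq_iff forall_3 inner_vec_def sum_3 field_simps)

lemma povm_tetrahedron: "povm 4 (uniform_povm 4 tetrahedron)"
  by (rule povm_uniform_povm) (simp_all add: norm_tetrahedron sum_tetrahedron)

lemma simulates_tetrahedron: "simulates 4 (uniform_povm 4 tetrahedron) UNIV all_dirs (noisy_meas (1/3))"
  by (rule simulates_uniform_povm)
    (simp_all add: norm_tetrahedron sum_tetrahedron tetrahedron_frame all_dirs_def)

lemma povm_trine: "povm 3 (uniform_povm 3 trine)"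
  by (rule povm_uniform_povm) (simp_all add: norm_trine sum_trine)

lemma simulates_trine: "simulates 3 (uniform_povm 3 trine) UNIV planar_dirs (noisy_meas (1/2))"
  by (rule simulates_uniform_povm) (simp_all add: norm_trine sum_trine trine_frame planar_dirs_def)

theorem proposition3:
  shows "Rp 3 = 1/2 \<and> R 4 = 1/3"
proof
  show "Rp 3 = 1/2" unfolding Rp_def
  proof (rule cSup_eq_maximum)
    show "1/2 \<in> {r. r \<ge> 0 \<and> (\<exists>P. povm 3 P \<and> simulates 3 P UNIV planar_dirs (noisy_meas r))}"
      using povm_trine simulates_trine by auto
  qed (use planar_simulation_radius_le_3_outcomes in blast)
  show "R 4 = 1/3" unfolding R_def
  proof (rule cSup_eq_maximum)
    show "1/3 \<in> {r. r \<ge> 0 \<and> (\<exists>P. povm 4 P \<and> simulates 4 P UNIV all_dirs (noisy_meas r))}"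
      using povm_tetrahedron simulates_tetrahedron by auto
  qed (use simulation_radius_le_4_outcomes in blast)
qed

end
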